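(* Let $R$ be a partial algebra over an algebraically closed field $k$ in which every element is algebraic over $k$ (e.g. a finite-dimensional $k$-algebra with its standard partial algebra structure). Then a morphism of partial $k$-algebras $R\to k$ is uniquely determined by its restriction to the set of idempotents of $R$ (elements $e$ with $e\cdot e=e$).
   Context: A partial $k$-algebra is a set $R$ with a reflexive symmetric relation $\perp$ (commeasurability), partial operations $+,\cdot$ defined on pairs $a\perp b$, scalar multiplication $k\times R\to R$, and elements $0,1$ such that: every $a$ is commeasurable with $0$ and $1$; if $a_1,a_2,a_3$ are pairwise commeasurable and $\lambda\in k$ then $a_1+a_2$, $a_1a_2$, $\lambda a_1$ are commeasurable with $a_3$ (resp. $a_2$); for pairwise commeasurable $a_1,a_2,a_3$ the values of all commutative polynomials in them form a commutative $k$-algebra. A full $k$-algebra has the standard partial structure with $a\perp b$ iff $ab=ba$. An element $a$ is algebraic if $k[a]$ (values of polynomials in $a$) is finite-dimensional over $k$. A morphism $f\colon R\to k$ satisfies, for $a\perp b$, $\lambda\in k$: $f(\lambda a)=\lambda f(a)$, $f(a+b)=f(a)+f(b)$, $f(ab)=f(a)f(b)$, $f(0)=0$, $f(1)=1$. *)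

theory Defs
  imports "HOL-Computational_Algebra.Polynomial"
begin

text \<open>A partial k-algebra, given by its carrier, commeasurability relation, the (partial)
  operations (only meaningful on commeasurable pairs), scalar multiplication, zero and one.\<close>

record ('k, 'a) palg =
  pcarrier :: "'a set"
  pcm :: "'a \<Rightarrow> 'a \<Rightarrow> bool"
  padd :: "'a \<Rightarrow> 'a \<Rightarrow> 'a"
  pmul :: "'a \<Rightarrow> 'a \<Rightarrow> 'a"
  psmul :: "'k \<Rightarrow> 'a \<Rightarrow> 'a"
  pzero :: 'a
  pone :: 'a

inductive_set pgen :: "('k, 'a, 'b) palg_scheme \<Rightarrow> 'a \<Rightarrow> 'a \<Rightarrow> 'a \<Rightarrow> 'a set"
  for R a1 a2 a3 where
  g1: "a1 \<in> pgen R a1 a2 a3"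
| g2: "a2 \<in> pgen R a1 a2 a3"
| g3: "a3 \<in> pgen R a1 a2 a3"
| g0: "pzero R \<in> pgen R a1 a2 a3"
| gone: "pone R \<in> pgen R a1 a2 a3"
| gadd: "x \<in> pgen R a1 a2 a3 \<Longrightarrow> y \<in> pgen R a1 a2 a3 \<Longrightarrow> padd R x y \<in> pgen R a1 a2 a3"
| gmul: "x \<in> pgen R a1 a2 a3 \<Longrightarrow> y \<in> pgen R a1 a2 a3 \<Longrightarrow> pmul R x y \<in> pgen R a1 a2 a3"
| gsmul: "x \<in> pgen R a1 a2 a3 \<Longrightarrow> psmul R c x \<in> pgen R a1 a2 a3"

definition comm_alg_on :: "('k::field, 'a, 'b) palg_scheme \<Rightarrow> 'a set \<Rightarrow> bool" where
  "comm_alg_on R S \<longleftrightarrow>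
     pzero R \<in> S \<and> pone R \<in> S \<and>
     (\<forall>x\<in>S. \<forall>y\<in>S. pcm R x y \<and> padd R x y \<in> S \<and> pmul R x y \<in> S) \<and>
     (\<forall>c. \<forall>x\<in>S. psmul R c x \<in> S) \<and>
     (\<forall>x\<in>S. \<forall>y\<in>S. \<forall>z\<in>S.
        padd R (padd R x y) z = padd R x (padd R y z) \<and>
        pmul R (pmul R x y) z = pmul R x (pmul R y z) \<and>
        pmul R x (padd R y z) = padd R (pmul R x y) (pmul R x z)) \<and>
     (\<forall>x\<in>S. \<forall>y\<in>S. padd R x y = padd R y x \<and> pmul R x y = pmul R y x) \<and>
     (\<forall>x\<in>S. padd R x (pzero R) = x \<and> pmul R x (pone R) = x \<and>
        (\<exists>y\<in>S. padd R x y = pzero R)) \<and>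
     (\<forall>c d. \<forall>x\<in>S. \<forall>y\<in>S.
        psmul R c (psmul R d x) = psmul R (c * d) x \<and>
        psmul R (c + d) x = padd R (psmul R c x) (psmul R d x) \<and>
        psmul R c (padd R x y) = padd R (psmul R c x) (psmul R c y) \<and>
        psmul R c (pmul R x y) = pmul R (psmul R c x) y \<and>
        psmul R 1 x = x)"

definition partial_algebra :: "('k::field, 'a, 'b) palg_scheme \<Rightarrow> bool" where
  "partial_algebra R \<longleftrightarrow>
     pzero R \<in> pcarrier R \<and> pone R \<in> pcarrier R \<and>
     (\<forall>a\<in>pcarrier R. \<forall>b\<in>pcarrier R. pcm R a b \<longrightarrow>
        padd R a b \<in> pcarrier R \<and> pmul R a b \<in> pcarrier R) \<and>
     (\<forall>c. \<forall>a\<in>pcarrier R. psmul R c a \<in> pcarrier R) \<and>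
     (\<forall>a\<in>pcarrier R. pcm R a a) \<and>
     (\<forall>a\<in>pcarrier R. \<forall>b\<in>pcarrier R. pcm R a b \<longrightarrow> pcm R b a) \<and>
     (\<forall>a\<in>pcarrier R. pcm R a (pzero R) \<and> pcm R a (pone R)) \<and>
     (\<forall>a1\<in>pcarrier R. \<forall>a2\<in>pcarrier R. \<forall>a3\<in>pcarrier R. \<forall>c.
        pcm R a1 a2 \<and> pcm R a1 a3 \<and> pcm R a2 a3 \<longrightarrow>
          pcm R (padd R a1 a2) a3 \<and> pcm R (pmul R a1 a2) a3 \<and> pcm R (psmul R c a1) a3) \<and>
     (\<forall>a1\<in>pcarrier R. \<forall>a2\<in>pcarrier R. \<forall>a3\<in>pcarrier R.
        pcm R a1 a2 \<and> pcm R a1 a3 \<and> pcm R a2 a3 \<longrightarrow> comm_alg_on R (pgen R a1 a2 a3))"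

fun peval :: "('k, 'a, 'b) palg_scheme \<Rightarrow> 'a \<Rightarrow> 'k list \<Rightarrow> 'a" where
  "peval R a [] = pzero R"
| "peval R a (c # cs) = padd R (psmul R c (pone R)) (pmul R a (peval R a cs))"

definition kpoly :: "('k, 'a, 'b) palg_scheme \<Rightarrow> 'a \<Rightarrow> 'a set" where
  "kpoly R a = {peval R a cs | cs. True}"

inductive_set pspan :: "('k, 'a, 'b) palg_scheme \<Rightarrow> 'a set \<Rightarrow> 'a set" for R B where
  s0: "pzero R \<in> pspan R B"
| sB: "b \<in> B \<Longrightarrow> b \<in> pspan R B"
| sadd: "x \<in> pspan R B \<Longrightarrow> y \<in> pspan R B \<Longrightarrow> padd R x y \<in> pspan R B"
| ssmul: "x \<in> pspan R B \<Longrightarrow> psmul R c x \<in> pspan R B"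

text \<open>a is algebraic: k[a] is finite-dimensional over k (spanned by a finite subset).\<close>

definition palgebraic :: "('k, 'a, 'b) palg_scheme \<Rightarrow> 'a \<Rightarrow> bool" where
  "palgebraic R a \<longleftrightarrow> (\<exists>B. finite B \<and> B \<subseteq> kpoly R a \<and> kpoly R a \<subseteq> pspan R B)"

definition pmorphism :: "('k::field, 'a, 'b) palg_scheme \<Rightarrow> ('a \<Rightarrow> 'k) \<Rightarrow> bool" where
  "pmorphism R f \<longleftrightarrow>
     (\<forall>a\<in>pcarrier R. \<forall>b\<in>pcarrier R. \<forall>c. pcm R a b \<longrightarrow>
        f (psmul R c a) = c * f a \<and> f (padd R a b) = f a + f b \<and>
        f (pmul R a b) = f a * f b) \<and>
     f (pzero R) = 0 \<and> f (pone R) = 1"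

end

theory Submission
  imports Defs "HOL-Algebra.Ring"
begin

text \<open>
  Fix a in R. The values of polynomials in a form a commutative k-algebra A, and evaluation
  k[x] \<rightarrow> A is a ring homomorphism; as a is algebraic, some p \<noteq> 0 satisfies p(a) = 0.
  A morphism f sends q(a) to q(f a), so f a and g a are roots of p. If they differed, then
  splitting p as (x - f a)^r q with q(f a) \<noteq> 0 \<noteq> r, the Chinese remainder theorem would give
  a polynomial e with e * e \<equiv> e (mod p), e(f a) = 1 and e(g a) = 0, and e(a) would be an
  idempotent on which f and g disagree.
\<close>

lemma poly_idempotent_separating_roots:
  fixes p :: "'a::field poly"
  assumes "p \<noteq> 0" "poly p l = 0" "poly p u = 0" "l \<noteq> u"
  obtains e k where "e * e = e + p * k" "poly e l = 1" "poly e u = 0"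
proof -
  define r where "r = order l p"
  obtain q where p_eq: "p = [:-l, 1:] ^ r * q" and "\<not> [:-l, 1:] dvd q"
    using order_decomp[OF \<open>p \<noteq> 0\<close>] r_def by blast
  have "r \<noteq> 0"
    using assms(1,2) order_root r_def by blast
  have "poly q l \<noteq> 0"
    using \<open>\<not> [:-l, 1:] dvd q\<close> poly_eq_0_iff_dvd by blast
  have "poly q u = 0"
    using assms(3,4) by (simp add: p_eq)
  define w where "w = 1 - smult (inverse (poly q l)) q"
  have "poly w l = 0" "poly w u = 1"
    using \<open>poly q l \<noteq> 0\<close> \<open>poly q u = 0\<close> by (simp_all add: w_def)
  then have "[:-l, 1:] dvd w"
    using poly_eq_0_iff_dvd by blast
  then obtain k1 where k1: "w ^ r = [:-l, 1:] ^ r * k1"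
    by (metis dvdE dvd_power_same)
  have "q dvd 1 - w ^ n" for n
  proof (induction n)
    case (Suc n)
    have "1 - w ^ Suc n = (1 - w ^ n) + w ^ n * smult (inverse (poly q l)) q"
      by (simp add: w_def algebra_simps)
    then show ?case
      by (simp only:) (intro dvd_add Suc dvd_mult dvd_smult dvd_refl)
  qed simp
  then obtain k2 where k2: "1 - w ^ r = q * k2"
    by (metis dvdE)
  define e where "e = 1 - w ^ r"
  have "e * e = e - w ^ r * (1 - w ^ r)"
    by (simp add: e_def algebra_simps)
  also have "w ^ r * (1 - w ^ r) = ([:-l, 1:] ^ r * k1) * (q * k2)"
    by (subst k2, subst k1) (rule refl)
  also have "\<dots> = p * (k1 * k2)"
    by (simp add: p_eq algebra_simps)
  finally have "e * e = e + p * - (k1 * k2)"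
    by simp
  moreover have "poly e l = 1" "poly e u = 0"
    using \<open>poly w l = 0\<close> \<open>poly w u = 1\<close> \<open>r \<noteq> 0\<close> by (simp_all add: e_def)
  ultimately show thesis
    using that by blast
qed

definition ring_of :: "('k, 'a, 'b) palg_scheme \<Rightarrow> 'a set \<Rightarrow> 'a ring" where
  "ring_of R A = \<lparr>carrier = A, mult = pmul R, one = pone R, zero = pzero R, add = padd R\<rparr>"

lemma ring_of_simps [simp]:
  "carrier (ring_of R A) = A" "mult (ring_of R A) = pmul R" "one (ring_of R A) = pone R"
  "zero (ring_of R A) = pzero R" "add (ring_of R A) = padd R"
  by (simp_all add: ring_of_def)

lemma comm_alg_on_cring:
  assumes "comm_alg_on R A"
  shows "cring (ring_of R A)"
proof (rule cringI)
  show "abelian_group (ring_of R A)"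
  proof (rule abelian_groupI)
    show "\<exists>y\<in>carrier (ring_of R A). y \<oplus>\<^bsub>ring_of R A\<^esub> x = \<zero>\<^bsub>ring_of R A\<^esub>"
      if "x \<in> carrier (ring_of R A)" for x
      using assms that unfolding comm_alg_on_def by simp metis
  qed (use assms in \<open>auto simp: comm_alg_on_def\<close>)
  show "comm_monoid (ring_of R A)"
    using assms by (intro comm_monoidI) (auto simp: comm_alg_on_def)
  show "(x \<oplus>\<^bsub>ring_of R A\<^esub> y) \<otimes>\<^bsub>ring_of R A\<^esub> z
          = x \<otimes>\<^bsub>ring_of R A\<^esub> z \<oplus>\<^bsub>ring_of R A\<^esub> y \<otimes>\<^bsub>ring_of R A\<^esub> z"
    if "x \<in> carrier (ring_of R A)" "y \<in> carrier (ring_of R A)" "z \<in> carrier (ring_of R A)"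
    for x y z
    using assms that unfolding comm_alg_on_def by simp
qed

definition peval_poly :: "('k::zero, 'a, 'b) palg_scheme \<Rightarrow> 'a \<Rightarrow> 'k poly \<Rightarrow> 'a" where
  "peval_poly R a p = peval R a (coeffs p)"

locale palg_subalgebra =
  fixes R :: "('k::field, 'a, 'b) palg_scheme" and A :: "'a set"
  assumes comm_alg_on: "comm_alg_on R A"
begin

sublocale A: cring "ring_of R A"
  by (rule comm_alg_on_cring[OF comm_alg_on])

lemma
  shows pzero_closed [simp]: "pzero R \<in> A"
    and pone_closed [simp]: "pone R \<in> A"
    and padd_closed [simp]: "x \<in> A \<Longrightarrow> y \<in> A \<Longrightarrow> padd R x y \<in> A"
    and pmul_closed [simp]: "x \<in> A \<Longrightarrow> y \<in> A \<Longrightarrow> pmul R x y \<in> A"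
    and psmul_closed [simp]: "x \<in> A \<Longrightarrow> psmul R c x \<in> A"
    and pcm_closed: "x \<in> A \<Longrightarrow> y \<in> A \<Longrightarrow> pcm R x y"
    and psmul_add_scalar: "x \<in> A \<Longrightarrow> psmul R (c + d) x = padd R (psmul R c x) (psmul R d x)"
    and psmul_psmul: "x \<in> A \<Longrightarrow> psmul R c (psmul R d x) = psmul R (c * d) x"
    and psmul_pmul: "x \<in> A \<Longrightarrow> y \<in> A \<Longrightarrow> psmul R c (pmul R x y) = pmul R (psmul R c x) y"
  using comm_alg_on by (auto simp: comm_alg_on_def)

lemma pzero_pone_simps [simp]:
  "x \<in> A \<Longrightarrow> padd R x (pzero R) = x" "x \<in> A \<Longrightarrow> padd R (pzero R) x = x"
  "x \<in> A \<Longrightarrow> pmul R x (pzero R) = pzero R" "x \<in> A \<Longrightarrow> pmul R (pzero R) x = pzero R"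
  "x \<in> A \<Longrightarrow> pmul R x (pone R) = x" "x \<in> A \<Longrightarrow> pmul R (pone R) x = x"
  using A.r_zero[of x] A.l_zero[of x] A.r_null[of x] A.l_null[of x] A.r_one[of x] A.l_one[of x]
  by simp_all

lemmas padd_ac = A.add.m_ac[simplified]
  and pmul_ac = A.m_ac[simplified]
  and pmul_padd_distrib = A.l_distr[simplified] A.r_distr[simplified]

definition const :: "'k \<Rightarrow> 'a" where
  "const c = psmul R c (pone R)"

lemma const_closed [simp]: "const c \<in> A"
  by (simp add: const_def)

lemma psmul_eq_const_mult: "x \<in> A \<Longrightarrow> psmul R c x = pmul R (const c) x"
  using psmul_pmul[of "pone R" x c] by (simp add: const_def)

lemma const_add: "const (c + d) = padd R (const c) (const d)"
  by (simp add: const_def psmul_add_scalar)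

lemma const_mult: "const (c * d) = pmul R (const c) (const d)"
  using psmul_psmul[of "pone R" c d] psmul_eq_const_mult[of "const d" c]
  by (simp add: const_def)

lemma const_zero: "const 0 = pzero R"
  using A.add.l_cancel_one[of "const 0" "const 0"] const_add[of 0 0] by simp

context
  fixes a assumes a_closed [simp]: "a \<in> A"
begin

lemma peval_closed [simp]: "peval R a cs \<in> A"
  by (induction cs) simp_all

lemma peval_poly_closed [simp]: "peval_poly R a p \<in> A"
  by (simp add: peval_poly_def)

lemma peval_poly_0 [simp]: "peval_poly R a 0 = pzero R"
  by (simp add: peval_poly_def)

lemma peval_poly_pCons:
  "peval_poly R a (pCons c p) = padd R (const c) (pmul R a (peval_poly R a p))"
proof (cases "c = 0 \<and> p = 0")
  case True
  then show ?thesis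
    by (simp add: const_zero)
next
  case False
  then show ?thesis
    by (auto simp: peval_poly_def const_def cCons_def)
qed

lemma peval_poly_add: "peval_poly R a (p + q) = padd R (peval_poly R a p) (peval_poly R a q)"
proof (induction p q rule: poly_induct2)
  case (pCons c p d q)
  then show ?case
    by (simp add: peval_poly_pCons const_add padd_ac pmul_padd_distrib)
qed simp

lemma peval_poly_smult: "peval_poly R a (smult c p) = pmul R (const c) (peval_poly R a p)"
proof (induction p)
  case (pCons d p)
  then show ?case
    by (simp add: peval_poly_pCons const_mult pmul_ac pmul_padd_distrib)
qed simp

lemma peval_poly_mult: "peval_poly R a (p * q) = pmul R (peval_poly R a p) (peval_poly R a q)"
proof (induction p)
  case (pCons c p)
  then show ?case
    by (simp add: peval_poly_pCons peval_poly_add peval_poly_smult const_zero pmul_ac pmul_padd_distrib)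
qed simp

lemma peval_eq_peval_poly: "peval R a cs = peval_poly R a (Poly cs)"
  by (induction cs) (simp_all add: peval_poly_pCons const_def)

lemma kpoly_eq_range_peval_poly: "kpoly R a = range (peval_poly R a)"
proof -
  have "kpoly R a = peval_poly R a ` range Poly"
    unfolding kpoly_def by (auto simp: peval_eq_peval_poly)
  then show ?thesis
    by (metis Poly_coeffs surj_def)
qed

lemma pspan_peval_poly_degree_bounded:
  assumes "finite B" "B \<subseteq> range (peval_poly R a)"
  obtains D where "\<And>x. x \<in> pspan R B \<Longrightarrow> \<exists>q. degree q \<le> D \<and> peval_poly R a q = x"
proof -
  obtain pre where pre: "\<And>b. b \<in> B \<Longrightarrow> peval_poly R a (pre b) = b"
    using assms(2) by (metis f_inv_into_f subsetD)
  define D where "D = Max (insert 0 (degree ` pre ` B))"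
  have "\<exists>q. degree q \<le> D \<and> peval_poly R a q = x" if "x \<in> pspan R B" for x
    using that
  proof (induction rule: pspan.induct)
    case s0
    show ?case
      by (intro exI[of _ 0]) simp
  next
    case (sB b)
    then show ?case
      using pre assms(1) by (intro exI[of _ "pre b"]) (auto simp: D_def)
  next
    case (sadd x y)
    then obtain q1 q2 where "degree q1 \<le> D" "peval_poly R a q1 = x"
      and "degree q2 \<le> D" "peval_poly R a q2 = y"
      by blast
    then show ?case
      by (intro exI[of _ "q1 + q2"]) (auto simp: peval_poly_add intro: order.trans[OF degree_add_le])
  next
    case (ssmul x c)
    then obtain q where "degree q \<le> D" "peval_poly R a q = x"
      by blast
    then show ?case
      by (intro exI[of _ "smult c q"])
        (auto simp: peval_poly_smult psmul_eq_const_mult intro: order.trans[OF degree_smult_le])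
  qed
  then show thesis
    using that by blast
qed

lemma palgebraic_imp_annihilator:
  assumes "palgebraic R a"
  obtains p where "p \<noteq> 0" "peval_poly R a p = pzero R"
proof -
  obtain B where "finite B" "B \<subseteq> kpoly R a" "kpoly R a \<subseteq> pspan R B"
    using assms unfolding palgebraic_def by blast
  then obtain D where D: "\<And>x. x \<in> pspan R B \<Longrightarrow> \<exists>q. degree q \<le> D \<and> peval_poly R a q = x"
    using pspan_peval_poly_degree_bounded kpoly_eq_range_peval_poly by metis
  define m :: "'k poly" where "m = monom 1 (Suc D)"
  obtain q where "degree q \<le> D" and q_m: "peval_poly R a q = peval_poly R a m"
    using D \<open>kpoly R a \<subseteq> pspan R B\<close> kpoly_eq_range_peval_poly by blast
  then have "m - q \<noteq> 0"
    by (auto simp: m_def degree_monom_eq)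
  moreover have "peval_poly R a (m - q) = pzero R"
  proof -
    have "padd R (peval_poly R a (m - q)) (peval_poly R a q) = padd R (pzero R) (peval_poly R a q)"
      using peval_poly_add[of "m - q" q] q_m by simp
    then show ?thesis
      using A.add.right_cancel[of "peval_poly R a q" "peval_poly R a (m - q)" "pzero R"] by simp
  qed
  ultimately show thesis
    using that by blast
qed

lemma pmorphism_peval_poly:
  assumes "pmorphism R f" "A \<subseteq> pcarrier R"
  shows "f (peval_poly R a p) = poly p (f a)"
proof (induction p)
  case 0
  then show ?case
    using assms(1) by (simp add: pmorphism_def)
next
  case (pCons c p)
  have hom: "f (padd R x y) = f x + f y" "f (pmul R x y) = f x * f y" if "x \<in> A" "y \<in> A" for x y
    using assms that pcm_closed unfolding pmorphism_def by blast+
  have "pone R \<in> pcarrier R"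
    using assms(2) by auto
  then have "f (const c) = c"
    using assms(1) pcm_closed[of "pone R" "pone R"] unfolding pmorphism_def const_def by auto
  then show ?case
    using pCons by (simp add: peval_poly_pCons hom)
qed

lemma pmorphisms_agree_at_algebraic:
  assumes "A \<subseteq> pcarrier R" "palgebraic R a" "pmorphism R f" "pmorphism R g"
    and idempotents: "\<forall>e\<in>A. pmul R e e = e \<longrightarrow> f e = g e"
  shows "f a = g a"
proof (rule ccontr)
  assume "f a \<noteq> g a"
  obtain p where "p \<noteq> 0" and p_a: "peval_poly R a p = pzero R"
    using palgebraic_imp_annihilator[OF assms(2)] by blast
  have "poly p (f a) = 0" "poly p (g a) = 0"
    using pmorphism_peval_poly[OF assms(3,1), of p] pmorphism_peval_poly[OF assms(4,1), of p]
      assms(3,4) p_a by (simp_all add: pmorphism_def)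
  then obtain e k where e_idem: "e * e = e + p * k" and "poly e (f a) = 1" "poly e (g a) = 0"
    using poly_idempotent_separating_roots \<open>p \<noteq> 0\<close> \<open>f a \<noteq> g a\<close> by metis
  define x where "x = peval_poly R a e"
  have "pmul R x x = peval_poly R a (e + p * k)"
    unfolding x_def by (simp only: peval_poly_mult[symmetric] e_idem)
  also have "\<dots> = x"
    by (simp add: x_def peval_poly_add peval_poly_mult p_a)
  finally have "f x = g x"
    using idempotents by (simp add: x_def)
  moreover have "f x = 1" "g x = 0"
    using pmorphism_peval_poly[OF assms(3,1)] pmorphism_peval_poly[OF assms(4,1)]
      \<open>poly e (f a) = 1\<close> \<open>poly e (g a) = 0\<close> by (simp_all add: x_def)
  ultimately show False
    by simp
qed

end

end

lemma pgen_comm_alg_on: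
  assumes "partial_algebra R" "a1 \<in> pcarrier R" "a2 \<in> pcarrier R" "a3 \<in> pcarrier R"
    and "pcm R a1 a2" "pcm R a1 a3" "pcm R a2 a3"
  shows "comm_alg_on R (pgen R a1 a2 a3)"
  using assms unfolding partial_algebra_def by simp

lemma pgen_subset_pcarrier:
  assumes "partial_algebra R" "a1 \<in> pcarrier R" "a2 \<in> pcarrier R" "a3 \<in> pcarrier R"
    and "pcm R a1 a2" "pcm R a1 a3" "pcm R a2 a3"
  shows "pgen R a1 a2 a3 \<subseteq> pcarrier R"
proof
  interpret palg_subalgebra R "pgen R a1 a2 a3"
    using pgen_comm_alg_on[OF assms] by unfold_locales
  have op_closed: "padd R x y \<in> pcarrier R" "pmul R x y \<in> pcarrier R"
    if "x \<in> pcarrier R" "y \<in> pcarrier R" "pcm R x y" for x y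
    using assms(1) that by (simp_all add: partial_algebra_def)
  show "x \<in> pcarrier R" if "x \<in> pgen R a1 a2 a3" for x
    using that
  proof (induction rule: pgen.induct)
    case (gadd x y)
    then show ?case
      using op_closed pcm_closed by blast
  next
    case (gmul x y)
    then show ?case
      using op_closed pcm_closed by blast
  qed (use assms in \<open>simp_all add: partial_algebra_def\<close>)
qed

theorem lemma3p6:
  fixes R :: "('k::alg_closed_field, 'a) palg"
    and f g :: "'a \<Rightarrow> 'k"
  assumes "partial_algebra R"
    and "\<forall>a\<in>pcarrier R. palgebraic R a"
    and "pmorphism R f" and "pmorphism R g"
    and "\<forall>e\<in>pcarrier R. pmul R e e = e \<longrightarrow> f e = g e"
  shows "\<forall>a\<in>pcarrier R. f a = g a"
proof
  fix a
  assume "a \<in> pcarrier R"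
  then have "pcm R a a"
    using assms(1) by (simp add: partial_algebra_def)
  then have "comm_alg_on R (pgen R a a a)" "pgen R a a a \<subseteq> pcarrier R"
    using assms(1) \<open>a \<in> pcarrier R\<close> by (simp_all add: pgen_comm_alg_on pgen_subset_pcarrier)
  then interpret palg_subalgebra R "pgen R a a a"
    by unfold_locales
  show "f a = g a"
  proof (rule pmorphisms_agree_at_algebraic)
    show "palgebraic R a"
      using assms(2) \<open>a \<in> pcarrier R\<close> by blast
    show "\<forall>e\<in>pgen R a a a. pmul R e e = e \<longrightarrow> f e = g e"
      using assms(5) \<open>pgen R a a a \<subseteq> pcarrier R\<close> by blast
  qed (use assms(3,4) \<open>pgen R a a a \<subseteq> pcarrier R\<close> in \<open>auto intro: pgen.g1\<close>)
qed

end
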